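(* Consider a Markov decision process with finite state set $S$, finite action set $A$, transition kernel $T(s'\mid s,a)$, initial state distribution $p_0$ and discount factor $\gamma\in[0,1)$. Let $\beta>0$, $\alpha\in[0,1)$, let $\mu^U(a\mid s)$ be a policy with $\mu^U(a\mid s)>0$ for all $(s,a)$, let $d^U$ be a probability distribution on $S\times A$, and let $\Psi:S\times A\to\mathbb{R}$ be any function. For $Q:S\times A\to\mathbb{R}$ and a policy $\pi$ define $$V_Q^\pi(s)=\mathbb{E}_{a\sim\pi(\cdot\mid s)}\Big[Q(s,a)-\beta\log\frac{\pi(a\mid s)}{\mu^U(a\mid s)}\Big],\qquad \mathcal{T}^\pi[Q](s,a)=Q(s,a)-\gamma\,\mathbb{E}_{s'\sim T(\cdot\mid s,a)}\big[V_Q^\pi(s')\big],$$ $$L(Q,\pi)=(1-\gamma)\,\mathbb{E}_{s\sim p_0}\big[V_Q^\pi(s)\big]+(1-\alpha)\,\mathbb{E}_{(s,a)\sim d^U}\Big[\exp\Big(\frac{\Psi(s,a)-\mathcal{T}^\pi[Q](s,a)}{1-\alpha}\Big)\Big],$$ and, with $\delta(s,a)=\exp\big(\frac{\Psi(s,a)}{1-\alpha}\big)$, $$\widetilde{L}(Q,\pi)=(1-\gamma)\,\mathbb{E}_{s\sim p_0}\big[V_Q^\pi(s)\big]-\mathbb{E}_{(s,a)\sim d^U}\big[\delta(s,a)\,\mathcal{T}^\pi[Q](s,a)\big]+(1-\alpha)\,\mathbb{E}_{(s,a)\sim d^U}\big[\delta(s,a)\big].$$ Then $\widetilde{L}(Q,\pi)\le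 L(Q,\pi)$ for all $Q$ and $\pi$, with equality when $\mathcal{T}^\pi[Q](s,a)=0$ for all $(s,a)$.
   Context: In the paper, $\mu^U$ is the behavior policy of the union dataset, $d^U$ its state-action distribution, and $\Psi(s,a)=\log\frac{d^G(s,a)}{d^U(s,a)}-\alpha\log\frac{d^B(s,a)}{d^U(s,a)}$; the result holds for any real-valued $\Psi$. *)

theory Defs
  imports "HOL-Analysis.Analysis"
begin

definition is_dist :: "('x::finite \<Rightarrow> real) \<Rightarrow> bool" where
  "is_dist p \<longleftrightarrow> (\<forall>x. 0 \<le> p x) \<and> (\<Sum>x\<in>UNIV. p x) = 1"

definition is_policy :: "('s \<Rightarrow> 'a::finite \<Rightarrow> real) \<Rightarrow> bool" where
  "is_policy \<pi> \<longleftrightarrow> (\<forall>s. is_dist (\<pi> s))"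

definition soft_V :: "real \<Rightarrow> ('s \<Rightarrow> 'a::finite \<Rightarrow> real) \<Rightarrow> ('s \<Rightarrow> 'a \<Rightarrow> real)
    \<Rightarrow> ('s \<Rightarrow> 'a \<Rightarrow> real) \<Rightarrow> 's \<Rightarrow> real" where
  "soft_V \<beta> \<mu> Q \<pi> s = (\<Sum>a\<in>UNIV. \<pi> s a * (Q s a - \<beta> * ln (\<pi> s a / \<mu> s a)))"

definition bellman_res :: "real \<Rightarrow> real \<Rightarrow> ('s::finite \<Rightarrow> 'a::finite \<Rightarrow> 's \<Rightarrow> real)
    \<Rightarrow> ('s \<Rightarrow> 'a \<Rightarrow> real) \<Rightarrow> ('s \<Rightarrow> 'a \<Rightarrow> real) \<Rightarrow> ('s \<Rightarrow> 'a \<Rightarrow> real) \<Rightarrow> 's \<Rightarrow> 'a \<Rightarrow> real" where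
  "bellman_res \<gamma> \<beta> T \<mu> Q \<pi> s a =
     Q s a - \<gamma> * (\<Sum>s'\<in>UNIV. T s a s' * soft_V \<beta> \<mu> Q \<pi> s')"

definition loss_L :: "real \<Rightarrow> real \<Rightarrow> real \<Rightarrow> ('s::finite \<Rightarrow> 'a::finite \<Rightarrow> 's \<Rightarrow> real)
    \<Rightarrow> ('s \<Rightarrow> real) \<Rightarrow> ('s \<Rightarrow> 'a \<Rightarrow> real) \<Rightarrow> ('s \<times> 'a \<Rightarrow> real) \<Rightarrow> ('s \<Rightarrow> 'a \<Rightarrow> real)
    \<Rightarrow> ('s \<Rightarrow> 'a \<Rightarrow> real) \<Rightarrow> ('s \<Rightarrow> 'a \<Rightarrow> real) \<Rightarrow> real" where
  "loss_L \<gamma> \<beta> \<alpha> T p0 \<mu> dU \<Psi> Q \<pi> =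
     (1 - \<gamma>) * (\<Sum>s\<in>UNIV. p0 s * soft_V \<beta> \<mu> Q \<pi> s)
     + (1 - \<alpha>) * (\<Sum>(s,a)\<in>UNIV. dU (s,a) *
          exp ((\<Psi> s a - bellman_res \<gamma> \<beta> T \<mu> Q \<pi> s a) / (1 - \<alpha>)))"

definition loss_L_tilde :: "real \<Rightarrow> real \<Rightarrow> real \<Rightarrow> ('s::finite \<Rightarrow> 'a::finite \<Rightarrow> 's \<Rightarrow> real)
    \<Rightarrow> ('s \<Rightarrow> real) \<Rightarrow> ('s \<Rightarrow> 'a \<Rightarrow> real) \<Rightarrow> ('s \<times> 'a \<Rightarrow> real) \<Rightarrow> ('s \<Rightarrow> 'a \<Rightarrow> real)
    \<Rightarrow> ('s \<Rightarrow> 'a \<Rightarrow> real) \<Rightarrow> ('s \<Rightarrow> 'a \<Rightarrow> real) \<Rightarrow> real" where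
  "loss_L_tilde \<gamma> \<beta> \<alpha> T p0 \<mu> dU \<Psi> Q \<pi> =
     (let \<delta> = (\<lambda>s a. exp (\<Psi> s a / (1 - \<alpha>))) in
     (1 - \<gamma>) * (\<Sum>s\<in>UNIV. p0 s * soft_V \<beta> \<mu> Q \<pi> s)
     - (\<Sum>(s,a)\<in>UNIV. dU (s,a) * (\<delta> s a * bellman_res \<gamma> \<beta> T \<mu> Q \<pi> s a))
     + (1 - \<alpha>) * (\<Sum>(s,a)\<in>UNIV. dU (s,a) * \<delta> s a))"

end

theory Submission
  imports Defs
begin

text \<open>The loss \<open>L\<close> only sees the Bellman residual through \<open>exp ((\<Psi> - r) / (1 - \<alpha>))\<close>, and
  \<open>L_tilde\<close> replaces this convex function of \<open>r\<close> by its tangent line at \<open>r = 0\<close>. Convexity of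
  \<open>exp\<close> makes the tangent line a lower bound, with equality at the point of tangency; averaging
  with the nonnegative weights \<open>dU\<close> preserves both facts.\<close>

lemma exp_tangent_le: "exp x * (1 + (y - x)) \<le> exp (y :: real)"
proof -
  have "exp x * (1 + (y - x)) \<le> exp x * exp (y - x)"
    using exp_ge_add_one_self[of "y - x"] by (simp add: mult_left_mono)
  also have "\<dots> = exp y"
    by (simp add: exp_diff)
  finally show ?thesis .
qed

lemma scaled_exp_tangent_le:
  fixes c P t :: real
  assumes "c > 0"
  shows "c * exp (P / c) - exp (P / c) * t \<le> c * exp ((P - t) / c)"
proof -
  have "c * exp (P / c) - exp (P / c) * t = c * (exp (P / c) * (1 + ((P - t) / c - P / c)))"
    using assms by (simp add: field_simps)
  also have "\<dots> \<le> c * exp ((P - t) / c)"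
    using assms exp_tangent_le by (simp add: mult_left_mono)
  finally show ?thesis .
qed

lemma weighted_scaled_exp_tangent_le:
  fixes w P t :: "'i \<Rightarrow> real" and c :: real
  assumes "c > 0" and "\<And>i. 0 \<le> w i"
  shows "c * (\<Sum>i\<in>I. w i * exp (P i / c)) - (\<Sum>i\<in>I. w i * (exp (P i / c) * t i))
           \<le> c * (\<Sum>i\<in>I. w i * exp ((P i - t i) / c))"
proof -
  have "c * (\<Sum>i\<in>I. w i * exp (P i / c)) - (\<Sum>i\<in>I. w i * (exp (P i / c) * t i))
      = (\<Sum>i\<in>I. w i * (c * exp (P i / c) - exp (P i / c) * t i))"
    by (simp add: sum_distrib_left sum_subtractf algebra_simps)
  also have "\<dots> \<le> (\<Sum>i\<in>I. w i * (c * exp ((P i - t i) / c)))"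
    using assms by (intro sum_mono mult_left_mono scaled_exp_tangent_le) auto
  also have "\<dots> = c * (\<Sum>i\<in>I. w i * exp ((P i - t i) / c))"
    by (simp add: sum_distrib_left algebra_simps)
  finally show ?thesis .
qed

theorem proposition4p3:
  fixes T :: "'s::finite \<Rightarrow> 'a::finite \<Rightarrow> 's \<Rightarrow> real"
    and p0 :: "'s \<Rightarrow> real"
    and \<gamma> \<beta> \<alpha> :: real
    and \<mu> :: "'s \<Rightarrow> 'a \<Rightarrow> real"
    and dU :: "'s \<times> 'a \<Rightarrow> real"
    and \<Psi> :: "'s \<Rightarrow> 'a \<Rightarrow> real"
  assumes T_dist: "\<And>s a. is_dist (T s a)"
    and p0_dist: "is_dist p0"
    and gamma: "0 \<le> \<gamma>" "\<gamma> < 1"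
    and beta: "\<beta> > 0"
    and alpha: "0 \<le> \<alpha>" "\<alpha> < 1"
    and mu_pol: "is_policy \<mu>"
    and mu_pos: "\<And>s a. \<mu> s a > 0"
    and dU_dist: "is_dist dU"
  shows "\<forall>Q \<pi>. is_policy \<pi> \<longrightarrow>
           loss_L_tilde \<gamma> \<beta> \<alpha> T p0 \<mu> dU \<Psi> Q \<pi> \<le> loss_L \<gamma> \<beta> \<alpha> T p0 \<mu> dU \<Psi> Q \<pi>
         \<and> ((\<forall>s a. bellman_res \<gamma> \<beta> T \<mu> Q \<pi> s a = 0) \<longrightarrow>
              loss_L_tilde \<gamma> \<beta> \<alpha> T p0 \<mu> dU \<Psi> Q \<pi> = loss_L \<gamma> \<beta> \<alpha> T p0 \<mu> dU \<Psi> Q \<pi>)"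
proof (intro allI impI conjI)
  fix Q \<pi>
  have "1 - \<alpha> > 0"
    using alpha by simp
  moreover have "\<And>x. 0 \<le> dU x"
    using dU_dist unfolding is_dist_def by blast
  ultimately have "(1 - \<alpha>) * (\<Sum>x\<in>UNIV. dU x * exp (\<Psi>' x / (1 - \<alpha>)))
      - (\<Sum>x\<in>UNIV. dU x * (exp (\<Psi>' x / (1 - \<alpha>)) * R x))
      \<le> (1 - \<alpha>) * (\<Sum>x\<in>UNIV. dU x * exp ((\<Psi>' x - R x) / (1 - \<alpha>)))"
    for \<Psi>' R :: "'s \<times> 'a \<Rightarrow> real"
    by (rule weighted_scaled_exp_tangent_le)
  from this[of "case_prod \<Psi>" "case_prod (bellman_res \<gamma> \<beta> T \<mu> Q \<pi>)"]
  show "loss_L_tilde \<gamma> \<beta> \<alpha> T p0 \<mu> dU \<Psi> Q \<pi> \<le> loss_L \<gamma> \<beta> \<alpha> T p0 \<mu> dU \<Psi> Q \<pi>"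
    unfolding loss_L_def loss_L_tilde_def Let_def case_prod_unfold by simp
next
  fix Q \<pi>
  assume "\<forall>s a. bellman_res \<gamma> \<beta> T \<mu> Q \<pi> s a = 0"
  then show "loss_L_tilde \<gamma> \<beta> \<alpha> T p0 \<mu> dU \<Psi> Q \<pi> = loss_L \<gamma> \<beta> \<alpha> T p0 \<mu> dU \<Psi> Q \<pi>"
    unfolding loss_L_def loss_L_tilde_def Let_def by simp
qed

end
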